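(* Let $\Sigma \subseteq \Sigma'$ be vocabularies and let $T$ and $T'$ be $\Sigma$-equivalent theories over $\Sigma$ and $\Sigma'$ respectively. Let $O'$ be an operator on four-valued $\Sigma'$-structures and define the operator $O$ on four-valued $\Sigma$-structures by $O(\tilde I) = O'(\tilde I + \bot_{\Sigma'\setminus\Sigma})|_{\Sigma}$. If $O'$ is a propagator for $T'$, then $O$ is a propagator for $T$. If $O'$ is monotone, then $O$ is monotone as well.
   Context: Vocabularies are finite sets of predicate symbols. Truth values $\mathbf{t},\mathbf{f},\mathbf{u},\mathbf{i}$ with precision order $\mathbf{u} \le_p \mathbf{t} \le_p \mathbf{i}$, $\mathbf{u} \le_p \mathbf{f} \le_p \mathbf{i}$ ($\mathbf{t},\mathbf{f}$ incomparable). A four-valued $\Sigma$-structure $\tilde I$ has domain $D$ and assigns to each $P/n\in\Sigma$ a function $P^{\tilde I}:D^n\to\{\mathbf{t},\mathbf{f},\mathbf{u},\mathbf{i}\}$; two-valued structures (only $\mathbf{t},\mathbf{f}$) are identified with ordinary structures. $\tilde I \le_p \tilde J$ (same domain) iff pointwise $\le_p$. $\tilde I|_{\Sigma_0}$ is the restriction to $\Sigma_0\subseteq\Sigma$. For disjoint vocabularies $\Sigma_1,\Sigma_2$ and structures $\tilde I$ over $\Sigma_1$, $\tilde J$ over $\Sigma_2$ with the same domain, $\tilde I+\tilde J$ is the $(\Sigma_1\cup\Sigma_2)$-structure restricting to $\tilde I$ and $\tilde J$. $\bot_{\Sigma_0}$ denotes the $\Sigma_0$-structure (with the relevant domain) assigning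 $\mathbf{u}$ to every domain atom. A propagator for a theory $T$ over $\Sigma$ is a map $O$ on four-valued $\Sigma$-structures with (i) $\tilde I\le_p O(\tilde I)$ and (ii) $O(\tilde I)\le_p M$ for every two-valued model $M$ of $T$ with $\tilde I\le_p M$. An operator $O$ is monotone if $\tilde I\le_p\tilde J$ implies $O(\tilde I)\le_p O(\tilde J)$. Theories $T$ over $\Sigma_1$ and $T'$ over $\Sigma_2$, with $\Sigma\subseteq\Sigma_1\cap\Sigma_2$, are $\Sigma$-equivalent if for every two-valued $\Sigma$-structure $I$, $I$ has an expansion to $\Sigma_1$ satisfying $T$ iff $I$ has an expansion to $\Sigma_2$ satisfying $T'$. *)

theory Defs
  imports Main
begin

datatype tv = Tv | Fv | Uv | Iv

definition leq_tv :: "tv \<Rightarrow> tv \<Rightarrow> bool" where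
  "leq_tv x y \<longleftrightarrow> x = Uv \<or> y = Iv \<or> x = y"

text \<open>To make structures over a
  vocabulary canonical, all non-atoms (symbols outside the vocabulary, wrong-length
  tuples, tuples leaving D) are sent to Uv.\<close>
type_synonym ('p, 'd) str = "'d set \<times> ('p \<Rightarrow> 'd list \<Rightarrow> tv)"

definition is_atom :: "('p \<Rightarrow> nat) \<Rightarrow> 'p set \<Rightarrow> 'd set \<Rightarrow> 'p \<Rightarrow> 'd list \<Rightarrow> bool" where
  "is_atom ar \<Sigma> D P xs \<longleftrightarrow> P \<in> \<Sigma> \<and> length xs = ar P \<and> set xs \<subseteq> D"

definition wf_str :: "('p \<Rightarrow> nat) \<Rightarrow> 'p set \<Rightarrow> ('p, 'd) str \<Rightarrow> bool" where
  "wf_str ar \<Sigma> I \<longleftrightarrow> fst I \<noteq> {} \<and>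
     (\<forall>P xs. \<not> is_atom ar \<Sigma> (fst I) P xs \<longrightarrow> snd I P xs = Uv)"

definition two_valued :: "('p \<Rightarrow> nat) \<Rightarrow> 'p set \<Rightarrow> ('p, 'd) str \<Rightarrow> bool" where
  "two_valued ar \<Sigma> I \<longleftrightarrow>
     (\<forall>P xs. is_atom ar \<Sigma> (fst I) P xs \<longrightarrow> snd I P xs \<in> {Tv, Fv})"

definition leq_p :: "('p, 'd) str \<Rightarrow> ('p, 'd) str \<Rightarrow> bool" where
  "leq_p I J \<longleftrightarrow> fst I = fst J \<and> (\<forall>P xs. leq_tv (snd I P xs) (snd J P xs))"

definition restr :: "'p set \<Rightarrow> ('p, 'd) str \<Rightarrow> ('p, 'd) str" where
  "restr \<Sigma>0 I = (fst I, \<lambda>P xs. if P \<in> \<Sigma>0 then snd I P xs else Uv)"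

definition plus_str :: "'p set \<Rightarrow> ('p, 'd) str \<Rightarrow> ('p, 'd) str \<Rightarrow> ('p, 'd) str" where
  "plus_str \<Sigma>1 I J = (fst I, \<lambda>P xs. if P \<in> \<Sigma>1 then snd I P xs else snd J P xs)"

definition bot_str :: "'d set \<Rightarrow> ('p, 'd) str" where
  "bot_str D = (D, \<lambda>P xs. Uv)"

text \<open>A theory over \<Sigma> is represented by its class of (two-valued) models:
  M satisfies T iff M \<in> T.\<close>
definition sigma_equivalent ::
  "('p \<Rightarrow> nat) \<Rightarrow> 'p set \<Rightarrow> 'p set \<Rightarrow> ('p, 'd) str set \<Rightarrow> 'p set \<Rightarrow> ('p, 'd) str set \<Rightarrow> bool" where
  "sigma_equivalent ar \<Sigma> \<Sigma>1 T \<Sigma>2 T' \<longleftrightarrow>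
     (\<forall>I. wf_str ar \<Sigma> I \<and> two_valued ar \<Sigma> I \<longrightarrow>
        ((\<exists>M. wf_str ar \<Sigma>1 M \<and> two_valued ar \<Sigma>1 M \<and> restr \<Sigma> M = I \<and> M \<in> T) \<longleftrightarrow>
         (\<exists>M. wf_str ar \<Sigma>2 M \<and> two_valued ar \<Sigma>2 M \<and> restr \<Sigma> M = I \<and> M \<in> T')))"

definition propagator ::
  "('p \<Rightarrow> nat) \<Rightarrow> 'p set \<Rightarrow> ('p, 'd) str set \<Rightarrow> (('p, 'd) str \<Rightarrow> ('p, 'd) str) \<Rightarrow> bool" where
  "propagator ar \<Sigma> T Op \<longleftrightarrow>
     (\<forall>I. wf_str ar \<Sigma> I \<longrightarrow>
        leq_p I (Op I) \<and>
        (\<forall>M. wf_str ar \<Sigma> M \<and> two_valued ar \<Sigma> M \<and> M \<in> T \<and> leq_p I M \<longrightarrow> leq_p (Op I) M))"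

definition monotone_op ::
  "('p \<Rightarrow> nat) \<Rightarrow> 'p set \<Rightarrow> (('p, 'd) str \<Rightarrow> ('p, 'd) str) \<Rightarrow> bool" where
  "monotone_op ar \<Sigma> Op \<longleftrightarrow>
     (\<forall>I J. wf_str ar \<Sigma> I \<and> wf_str ar \<Sigma> J \<and> leq_p I J \<longrightarrow> leq_p (Op I) (Op J))"

end

theory Submission
  imports Defs
begin

text \<open>A \<Sigma>-structure is canonical: it assigns \<open>Uv\<close> to everything outside \<Sigma>. Hence padding
  it with \<open>\<bottom>\<close> and restricting back to \<Sigma> change nothing, and \<open>O\<close> agrees with \<open>O'\<close> followed
  by restriction. Precision of a \<Sigma>-structure below a \<Sigma>'-structure is decided on \<Sigma> alone,
  so the propagator condition for a model \<open>M\<close> of \<open>T\<close> follows from the one for an expansion of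
  \<open>M\<close> to a model of \<open>T'\<close>, which exists by \<Sigma>-equivalence; restriction preserves the
  precision order, which gives monotonicity.\<close>

lemma wf_str_mono:
  assumes "wf_str ar \<Sigma> I" and "\<Sigma> \<subseteq> \<Sigma>'"
  shows "wf_str ar \<Sigma>' I"
  using assms by (auto simp: wf_str_def is_atom_def)

lemma wf_str_outside_vocabulary:
  assumes "wf_str ar \<Sigma> I" and "P \<notin> \<Sigma>"
  shows "snd I P xs = Uv"
  using assms by (auto simp: wf_str_def is_atom_def)

lemma restr_eq_self:
  assumes "wf_str ar \<Sigma> I"
  shows "restr \<Sigma> I = I"
  using wf_str_outside_vocabulary[OF assms] by (auto simp: restr_def prod_eq_iff intro!: ext)

lemma plus_str_bot_eq_self:
  assumes "wf_str ar \<Sigma> I"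
  shows "plus_str \<Sigma> I (bot_str (fst I)) = I"
  using wf_str_outside_vocabulary[OF assms]
  by (auto simp: plus_str_def bot_str_def prod_eq_iff intro!: ext)

lemma leq_p_restr:
  assumes "leq_p I J"
  shows "leq_p (restr \<Sigma> I) (restr \<Sigma> J)"
  using assms by (auto simp: leq_p_def restr_def leq_tv_def)

lemma leq_p_if_leq_p_restr:
  assumes "wf_str ar \<Sigma> I" and "leq_p I (restr \<Sigma> M)"
  shows "leq_p I M"
  using assms wf_str_outside_vocabulary[OF assms(1)]
  by (auto simp: leq_p_def restr_def leq_tv_def split: if_splits)

lemma sigma_equivalent_expansion:
  assumes "sigma_equivalent ar \<Sigma> \<Sigma> T \<Sigma>' T'"
    and "wf_str ar \<Sigma> M" "two_valued ar \<Sigma> M" "M \<in> T"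
  obtains M' where "wf_str ar \<Sigma>' M'" "two_valued ar \<Sigma>' M'" "restr \<Sigma> M' = M" "M' \<in> T'"
  using assms restr_eq_self[OF assms(2)] unfolding sigma_equivalent_def by blast

lemma propagator_restr:
  fixes O' Op :: "('p, 'd) str \<Rightarrow> ('p, 'd) str"
  assumes "\<Sigma> \<subseteq> \<Sigma>'" and "sigma_equivalent ar \<Sigma> \<Sigma> T \<Sigma>' T'"
    and Op: "\<And>I. wf_str ar \<Sigma> I \<Longrightarrow> Op I = restr \<Sigma> (O' I)"
    and propag: "propagator ar \<Sigma>' T' O'"
  shows "propagator ar \<Sigma> T Op"
  unfolding propagator_def
proof (intro allI impI conjI)
  fix I :: "('p, 'd) str" assume I: "wf_str ar \<Sigma> I"
  have I': "wf_str ar \<Sigma>' I" using wf_str_mono[OF I assms(1)] .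
  have "leq_p I (O' I)" using propag I' unfolding propagator_def by blast
  then show "leq_p I (Op I)"
    using leq_p_restr restr_eq_self[OF I] Op[OF I] by metis
  fix M :: "('p, 'd) str" assume M: "wf_str ar \<Sigma> M \<and> two_valued ar \<Sigma> M \<and> M \<in> T \<and> leq_p I M"
  then obtain M' where M': "wf_str ar \<Sigma>' M'" "two_valued ar \<Sigma>' M'"
      and restr_M': "restr \<Sigma> M' = M" and "M' \<in> T'"
    using sigma_equivalent_expansion[OF assms(2)] by blast
  have "leq_p I M'"
    using leq_p_if_leq_p_restr[OF I] M restr_M' by simp
  then have "leq_p (O' I) M'"
    using propag I' M' \<open>M' \<in> T'\<close> unfolding propagator_def by blast
  then show "leq_p (Op I) M"
    using leq_p_restr restr_M' Op[OF I] by metis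
qed

lemma monotone_op_restr:
  fixes O' Op :: "('p, 'd) str \<Rightarrow> ('p, 'd) str"
  assumes "\<Sigma> \<subseteq> \<Sigma>'"
    and Op: "\<And>I. wf_str ar \<Sigma> I \<Longrightarrow> Op I = restr \<Sigma> (O' I)"
    and mono: "monotone_op ar \<Sigma>' O'"
  shows "monotone_op ar \<Sigma> Op"
  unfolding monotone_op_def
proof (intro allI impI)
  fix I J :: "('p, 'd) str" assume IJ: "wf_str ar \<Sigma> I \<and> wf_str ar \<Sigma> J \<and> leq_p I J"
  then have "leq_p (O' I) (O' J)"
    using mono wf_str_mono[OF _ assms(1)] unfolding monotone_op_def by blast
  then show "leq_p (Op I) (Op J)"
    using leq_p_restr IJ Op by simp
qed

theorem proposition3p3:
  fixes ar :: "'p \<Rightarrow> nat"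
    and \<Sigma> \<Sigma>' :: "'p set"
    and T T' :: "('p, 'd) str set"
    and O' Op :: "('p, 'd) str \<Rightarrow> ('p, 'd) str"
  assumes "finite \<Sigma>'" and "\<Sigma> \<subseteq> \<Sigma>'"
    and "sigma_equivalent ar \<Sigma> \<Sigma> T \<Sigma>' T'"
    and "\<And>I. Op I = restr \<Sigma> (O' (plus_str \<Sigma> I (bot_str (fst I))))"
  shows "(propagator ar \<Sigma>' T' O' \<longrightarrow> propagator ar \<Sigma> T Op)
       \<and> (monotone_op ar \<Sigma>' O' \<longrightarrow> monotone_op ar \<Sigma> Op)"
proof -
  have Op: "Op I = restr \<Sigma> (O' I)" if "wf_str ar \<Sigma> I" for I
    using assms(4) plus_str_bot_eq_self[OF that] by simp
  show ?thesis
    using propagator_restr[OF assms(2,3)] monotone_op_restr[OF assms(2)] Op by blast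
qed

end
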